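(* Let $\mathcal{G}=\{G_n\}_{n=1}^\infty$ be a graph sequence which is a large girth sequence. Then $e(\mathcal{G})=c(\mathcal{G})$.
   Context: A graph sequence is a sequence $\mathcal{G}=\{G_n\}_{n=1}^\infty$ of finite simple graphs such that $\sup_n \max_{x\in V(G_n)}\deg(x)<\infty$ and $|V(G_n)|\to\infty$. For graph sequences $\mathcal{G},\mathcal{H}$ with $V(H_n)=V(G_n)$ for all $n$, write $\mathcal{H}\prec\mathcal{G}$ if there is an integer $L>0$ such that $d_{G_n}(x,y)\le L\, d_{H_n}(x,y)$ for all $n$ and all $x,y\in V(G_n)$, where $d_{G_n},d_{H_n}$ are the shortest path metrics; $\mathcal{G}\simeq\mathcal{H}$ means $\mathcal{H}\prec\mathcal{G}$ and $\mathcal{G}\prec\mathcal{H}$. The edge number is $e(\mathcal{G})=\liminf_{n\to\infty}|E(G_n)|/|V(G_n)|$ and the cost is $c(\mathcal{G})=\inf_{\mathcal{H}\simeq\mathcal{G}} e(\mathcal{H})$. $\mathcal{G}$ is a large girth sequence if for every $k\ge1$ there is $n_k$ such that for $n\ge n_k$ the graph $G_n$ contains no cycle of length at most $k$. *)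

theory Defs
  imports Complex_Main "HOL-Library.Extended_Nat" "HOL-Library.Extended_Real"
    "HOL-Library.Liminf_Limsup"
begin

text \<open>A graph sequence is given by vertex sets V n and adjacency relations E n
  (simple graphs: symmetric, irreflexive, edges inside V n). Indexing starts at n = 0.\<close>

definition simple_graph :: "'a set \<Rightarrow> ('a \<Rightarrow> 'a \<Rightarrow> bool) \<Rightarrow> bool" where
  "simple_graph V E \<longleftrightarrow> finite V \<and> (\<forall>x y. E x y \<longrightarrow> x \<in> V \<and> y \<in> V \<and> x \<noteq> y \<and> E y x)"

definition graph_seq :: "(nat \<Rightarrow> 'a set) \<Rightarrow> (nat \<Rightarrow> 'a \<Rightarrow> 'a \<Rightarrow> bool) \<Rightarrow> bool" where
  "graph_seq V E \<longleftrightarrow> (\<forall>n. simple_graph (V n) (E n))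
     \<and> (\<exists>D::nat. \<forall>n. \<forall>x\<in>V n. card {y. E n x y} \<le> D)
     \<and> filterlim (\<lambda>n. card (V n)) at_top sequentially"

definition is_walk :: "'a set \<Rightarrow> ('a \<Rightarrow> 'a \<Rightarrow> bool) \<Rightarrow> 'a list \<Rightarrow> bool" where
  "is_walk V E xs \<longleftrightarrow> xs \<noteq> [] \<and> set xs \<subseteq> V \<and> (\<forall>i. Suc i < length xs \<longrightarrow> E (xs ! i) (xs ! Suc i))"

text \<open>Shortest path metric (infinite between different components).\<close>
definition gdist :: "'a set \<Rightarrow> ('a \<Rightarrow> 'a \<Rightarrow> bool) \<Rightarrow> 'a \<Rightarrow> 'a \<Rightarrow> enat" where
  "gdist V E x y = Inf {enat (length xs - 1) | xs. is_walk V E xs \<and> hd xs = x \<and> last xs = y}"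

text \<open>H \<prec> G.\<close>
definition seq_prec :: "(nat \<Rightarrow> 'a set) \<Rightarrow> (nat \<Rightarrow> 'a \<Rightarrow> 'a \<Rightarrow> bool) \<Rightarrow> (nat \<Rightarrow> 'a \<Rightarrow> 'a \<Rightarrow> bool) \<Rightarrow> bool" where
  "seq_prec V H G \<longleftrightarrow> (\<exists>L::nat. L > 0 \<and>
     (\<forall>n. \<forall>x\<in>V n. \<forall>y\<in>V n. gdist (V n) (G n) x y \<le> enat L * gdist (V n) (H n) x y))"

definition seq_equiv :: "(nat \<Rightarrow> 'a set) \<Rightarrow> (nat \<Rightarrow> 'a \<Rightarrow> 'a \<Rightarrow> bool) \<Rightarrow> (nat \<Rightarrow> 'a \<Rightarrow> 'a \<Rightarrow> bool) \<Rightarrow> bool" where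
  "seq_equiv V G H \<longleftrightarrow> seq_prec V H G \<and> seq_prec V G H"

definition num_edges :: "'a set \<Rightarrow> ('a \<Rightarrow> 'a \<Rightarrow> bool) \<Rightarrow> nat" where
  "num_edges V E = card {{x, y} | x y. x \<in> V \<and> y \<in> V \<and> E x y}"

definition edge_number :: "(nat \<Rightarrow> 'a set) \<Rightarrow> (nat \<Rightarrow> 'a \<Rightarrow> 'a \<Rightarrow> bool) \<Rightarrow> ereal" where
  "edge_number V E = liminf (\<lambda>n. ereal (real (num_edges (V n) (E n)) / real (card (V n))))"

definition cost :: "(nat \<Rightarrow> 'a set) \<Rightarrow> (nat \<Rightarrow> 'a \<Rightarrow> 'a \<Rightarrow> bool) \<Rightarrow> ereal" where
  "cost V G = Inf {edge_number V H | H. graph_seq V H \<and> seq_equiv V G H}"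

definition has_cycle_of_length :: "'a set \<Rightarrow> ('a \<Rightarrow> 'a \<Rightarrow> bool) \<Rightarrow> nat \<Rightarrow> bool" where
  "has_cycle_of_length V E m \<longleftrightarrow> 3 \<le> m \<and> (\<exists>xs. length xs = m \<and> distinct xs \<and> set xs \<subseteq> V
      \<and> (\<forall>i<m. E (xs ! i) (xs ! ((i + 1) mod m))))"

definition large_girth :: "(nat \<Rightarrow> 'a set) \<Rightarrow> (nat \<Rightarrow> 'a \<Rightarrow> 'a \<Rightarrow> bool) \<Rightarrow> bool" where
  "large_girth V E \<longleftrightarrow> (\<forall>k\<ge>1. \<exists>nk. \<forall>n\<ge>nk. \<forall>m\<le>k. \<not> has_cycle_of_length (V n) (E n) m)"

end

theory Submission
  imports Defs "HOL-Library.Z2" "HOL-Library.Function_Algebras" "HOL-Library.Indicator_Function"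
begin

text \<open>Let \<open>H\<close> be equivalent to \<open>G\<close>, with every \<open>H\<close>-edge spanned by a \<open>G\<close>-walk of length at most
  \<open>M\<close> and every \<open>G\<close>-edge by an \<open>H\<close>-walk of length at most \<open>L\<close>. Record a walk by its edge chain
  over \<open>\<int>/2\<close>. Replacing each edge of such an \<open>H\<close>-walk by the chosen \<open>G\<close>-walk turns a \<open>G\<close>-edge
  \<open>xy\<close> into a \<open>G\<close>-walk from \<open>x\<close> to \<open>y\<close> of length at most \<open>LM\<close> whose chain lies in the span of
  the \<open>|E(H)|\<close> chains of the chosen walks. Once the girth of \<open>G\<close> exceeds \<open>LM + 1\<close>, closing this
  walk with the edge \<open>yx\<close> gives a closed walk whose chain must vanish, since a closed walk with
  nonzero chain contains a cycle no longer than itself; hence the chain of the walk is the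
  indicator of \<open>xy\<close>. These indicators are independent, so \<open>|E(G)| \<le> |E(H)|\<close> for all large \<open>n\<close>.
  Conversely \<open>G\<close> is equivalent to itself, so the cost is at most \<open>e(G)\<close>.\<close>

section \<open>Walks and the path metric\<close>

lemma is_walk_Nil [simp]: "\<not> is_walk V E []"
  by (simp add: is_walk_def)

lemma is_walk_singleton [simp]: "is_walk V E [x] \<longleftrightarrow> x \<in> V"
  by (simp add: is_walk_def)

lemma is_walk_Cons_Cons [simp]:
  "is_walk V E (x # y # xs) \<longleftrightarrow> x \<in> V \<and> E x y \<and> is_walk V E (y # xs)"
  unfolding is_walk_def by (auto simp: less_Suc_eq_0_disj)

lemma set_subset_if_is_walk: "is_walk V E xs \<Longrightarrow> set xs \<subseteq> V"
  by (simp add: is_walk_def)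

lemma is_walk_append_iff:
  "is_walk V E (xs @ y # ys) \<longleftrightarrow> is_walk V E (xs @ [y]) \<and> is_walk V E (y # ys)"
  by (induction xs rule: induct_list012) (auto dest: set_subset_if_is_walk)

lemma is_walk_rev:
  assumes "\<And>x y. E x y \<Longrightarrow> E y x"
  shows "is_walk V E (rev xs) \<longleftrightarrow> is_walk V E xs"
proof (induction xs rule: induct_list012)
  case (3 x y xs)
  have "is_walk V E (rev (x # y # xs)) \<longleftrightarrow> is_walk V E (rev (y # xs)) \<and> is_walk V E [y, x]"
    using is_walk_append_iff[of V E "rev xs" y "[x]"] by simp
  then show ?case using 3 assms by (auto dest: set_subset_if_is_walk)
qed auto

lemma gdist_le_one_if_edge:
  assumes "E x y" "x \<in> V" "y \<in> V"
  shows "gdist V E x y \<le> 1"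
  unfolding gdist_def one_enat_def
  using assms by (intro Inf_lower CollectI exI[of _ "[x, y]"]) simp

lemma walk_if_gdist_le:
  assumes "gdist V E x y \<le> enat k"
  obtains xs where "is_walk V E xs" "hd xs = x" "last xs = y" "length xs \<le> Suc k"
proof -
  define A where "A = {enat (length xs - 1) | xs. is_walk V E xs \<and> hd xs = x \<and> last xs = y}"
  have "A \<noteq> {}"
    using assms unfolding gdist_def A_def[symmetric] by (auto simp: top_enat_def)
  then have "Inf A \<in> A"
    unfolding Inf_enat_def by (metis LeastI ex_in_conv)
  then obtain xs where "Inf A = enat (length xs - 1)" "is_walk V E xs" "hd xs = x" "last xs = y"
    unfolding A_def by blast
  moreover have "gdist V E x y = Inf A"
    unfolding gdist_def A_def ..
  ultimately show ?thesis
    using assms that by simp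
qed

section \<open>Edge chains over \<open>\<int>/2\<close>\<close>

fun walk_chain :: "'a list \<Rightarrow> 'a set \<Rightarrow> bit" where
  "walk_chain (x # y # xs) = indicator {{x, y}} + walk_chain (y # xs)"
| "walk_chain _ = 0"

lemma bit_fun_add_self [simp]: "(f :: 'b \<Rightarrow> bit) + f = 0"
proof
  show "(f + f) x = 0 x" for x
    by (cases "f x") simp_all
qed

lemma bit_fun_add_eq_0_iff: "(f :: 'b \<Rightarrow> bit) + g = 0 \<longleftrightarrow> f = g"
  by (metis add.assoc add_0 bit_fun_add_self)

lemma walk_chain_append:
  "walk_chain (xs @ y # ys) = walk_chain (xs @ [y]) + walk_chain (y # ys)"
proof (induction xs rule: induct_list012)
  case 1
  show ?case by (simp only: append.simps walk_chain.simps add_0)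
next
  case 2
  show ?case by (simp only: append.simps walk_chain.simps add_0_right)
next
  case 3
  then show ?case by (simp only: append_Cons walk_chain.simps(1) add.assoc)
qed

lemma walk_chain_rev: "walk_chain (rev xs) = walk_chain xs"
proof (induction xs rule: induct_list012)
  case (3 x y xs)
  have "walk_chain (rev (x # y # xs)) = walk_chain (rev (y # xs)) + walk_chain [y, x]"
    using walk_chain_append[of "rev xs" y "[x]"] by simp
  then show ?case
    using 3 by (simp add: insert_commute add.commute)
qed simp_all

interpretation fun_space: vector_space "\<lambda>(c :: 'k :: field) (f :: 'b \<Rightarrow> 'k) x. c * f x"
  by unfold_locales (auto simp: fun_eq_iff distrib_left distrib_right)

lemma sum_fun_apply: "sum f A x = (\<Sum>a\<in>A. f a x)"
  by (induction A rule: infinite_finite_induct) auto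

lemma independent_point_indicators:
  "fun_space.independent (range (\<lambda>e. indicator {e} :: 'b \<Rightarrow> 'k :: field))"
  unfolding fun_space.independent_explicit_module
proof (intro allI impI)
  fix t u v
  assume t: "finite t" "t \<subseteq> range (\<lambda>e. indicator {e})"
    and zero: "(\<Sum>v\<in>t. (\<lambda>x. u v * v x)) = (0 :: 'b \<Rightarrow> 'k)" and "v \<in> t"
  then obtain e where e: "v = indicator {e}" by blast
  have "0 = (\<Sum>w\<in>t. u w * w e)"
    using fun_cong[OF zero, of e] by (simp add: sum_fun_apply)
  also have "\<dots> = u v * v e + (\<Sum>w\<in>t - {v}. u w * w e)"
    by (rule sum.remove[OF t(1) \<open>v \<in> t\<close>])
  also have "(\<Sum>w\<in>t - {v}. u w * w e) = 0"
    using t(2) e by (intro sum.neutral) (fastforce simp: indicator_def)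
  finally show "u v = 0"
    using e by simp
qed

lemma inj_point_indicator: "inj (\<lambda>e. indicator {e} :: 'b \<Rightarrow> 'k :: zero_neq_one)"
  by (rule injI) (metis indicator_eq_1_iff singletonD singletonI)

section \<open>Closed walks and cycles\<close>

lemma has_cycle_if_closed_walk_distinct:
  assumes walk: "is_walk V E xs" and closed: "hd xs = last xs"
    and distinct: "distinct (butlast xs)" and long: "4 \<le> length xs"
  shows "has_cycle_of_length V E (length xs - 1)"
proof -
  define ys where "ys = butlast xs"
  define m where "m = length xs - 1"
  have m: "length ys = m" "3 \<le> m" "length xs = Suc m"
    using long unfolding ys_def m_def by auto
  have ys_nth: "i < m \<Longrightarrow> ys ! i = xs ! i" for i
    using m by (simp add: ys_def nth_butlast)
  have step: "Suc i < length xs \<Longrightarrow> E (xs ! i) (xs ! Suc i)" for i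
    using walk unfolding is_walk_def by blast
  have "xs \<noteq> []"
    using long by auto
  then have wrap: "xs ! 0 = xs ! m"
    using closed by (simp add: hd_conv_nth last_conv_nth m_def)
  have "E (ys ! i) (ys ! ((i + 1) mod m))" if "i < m" for i
  proof (cases "Suc i < m")
    case True
    then show ?thesis
      using ys_nth[of i] ys_nth[of "Suc i"] step[of i] m(3) that by simp
  next
    case False
    then have "Suc i = m"
      using that by simp
    moreover from this have "(i + 1) mod m = 0"
      by simp
    ultimately show ?thesis
      using ys_nth[of i] ys_nth[of 0] step[of i] m wrap that by simp
  qed
  moreover have "set ys \<subseteq> V"
    using set_subset_if_is_walk[OF walk] unfolding ys_def by (meson in_set_butlastD subset_iff)
  ultimately have "has_cycle_of_length V E m"
    unfolding has_cycle_of_length_def using m(1,2) distinct unfolding ys_def by blast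
  then show ?thesis
    unfolding m_def .
qed

lemma closed_walk_split:
  assumes walk: "is_walk V E xs" and closed: "hd xs = last xs"
    and repeat: "\<not> distinct (butlast xs)"
  obtains w1 w2 where "is_walk V E w1" "hd w1 = last w1" "length w1 < length xs"
    "is_walk V E w2" "hd w2 = last w2" "length w2 < length xs"
    "walk_chain xs = walk_chain w1 + walk_chain w2"
proof -
  obtain p y q r where "butlast xs = p @ [y] @ q @ [y] @ r"
    using not_distinct_decomp[OF repeat] by blast
  moreover have "xs \<noteq> []"
    using walk by auto
  ultimately obtain z where xs: "xs = p @ y # q @ y # r @ [z]"
    by (metis append_butlast_last_id append.assoc append_Cons append_Nil)
  define w1 where "w1 = y # q @ [y]"
  define w2 where "w2 = p @ y # r @ [z]"
  have "walk_chain xs = walk_chain (p @ [y]) + walk_chain w1 + walk_chain (y # r @ [z])"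
    using walk_chain_append[of p y "q @ y # r @ [z]"] walk_chain_append[of "y # q" y "r @ [z]"]
    unfolding xs w1_def by (simp add: add.assoc)
  moreover have "walk_chain w2 = walk_chain (p @ [y]) + walk_chain (y # r @ [z])"
    unfolding w2_def by (rule walk_chain_append)
  ultimately have "walk_chain xs = walk_chain w1 + walk_chain w2"
    by (simp add: ac_simps)
  moreover have "is_walk V E (p @ [y])" "is_walk V E w1" "is_walk V E (y # r @ [z])"
    using walk is_walk_append_iff[of V E p y "q @ y # r @ [z]"]
      is_walk_append_iff[of V E "y # q" y "r @ [z]"]
    unfolding xs w1_def by auto
  then have "is_walk V E w2"
    unfolding w2_def using is_walk_append_iff by metis
  moreover have "hd w2 = last w2"
    using closed unfolding xs w2_def by (cases p) auto
  moreover have "length w1 < length xs" "length w2 < length xs"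
    unfolding xs w1_def w2_def by simp_all
  ultimately show ?thesis
    using that \<open>is_walk V E w1\<close> unfolding w1_def by simp
qed

text \<open>A closed walk through a repeated vertex splits into two shorter closed walks whose chains
  add up; one without repetitions is a cycle once it has three edges, and shorter ones have zero
  chain or are loops.\<close>

lemma cycle_if_closed_walk_chain_nonzero:
  assumes irrefl: "\<And>x. \<not> E x x"
  shows "is_walk V E xs \<Longrightarrow> hd xs = last xs \<Longrightarrow> walk_chain xs \<noteq> 0
    \<Longrightarrow> \<exists>m < length xs. has_cycle_of_length V E m"
proof (induction "length xs" arbitrary: xs rule: less_induct)
  case less
  show ?case
  proof (cases "distinct (butlast xs)")
    case True
    have "xs \<noteq> []"
      using less.prems(1) by auto
    then consider a where "xs = [a]" | a b where "xs = [a, b]" | a b c where "xs = [a, b, c]"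
      | "4 \<le> length xs"
      by (cases xs; cases "tl xs"; cases "tl (tl xs)"; cases "tl (tl (tl xs))"; auto)
    then show ?thesis
    proof cases
      case (3 a b c)
      then have "walk_chain xs = indicator {{a, b}} + indicator {{b, a}}"
        using less.prems(2) by simp
      then show ?thesis
        using less.prems(3) by (simp add: insert_commute)
    next
      case 4
      then show ?thesis
        using has_cycle_if_closed_walk_distinct[OF less.prems(1,2) True]
        by (intro exI[of _ "length xs - 1"]) auto
    qed (use less.prems irrefl in auto)
  next
    case False
    obtain w1 w2 where w: "is_walk V E w1" "hd w1 = last w1" "length w1 < length xs"
      "is_walk V E w2" "hd w2 = last w2" "length w2 < length xs"
      and chain: "walk_chain xs = walk_chain w1 + walk_chain w2"
      using closed_walk_split[OF less.prems(1,2) False] by blast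
    have "walk_chain w1 \<noteq> 0 \<or> walk_chain w2 \<noteq> 0"
      using less.prems(3) chain by auto
    then show ?thesis
      using less.hyps w by (meson less_trans)
  qed
qed

lemma walk_chain_eq_edge_indicator_if_no_short_cycle:
  assumes irrefl: "\<And>x. \<not> E x x" and sym: "\<And>x y. E x y \<Longrightarrow> E y x"
    and no_cycle: "\<And>m. m \<le> length W \<Longrightarrow> \<not> has_cycle_of_length V E m"
    and edge: "E x y" and walk: "is_walk V E W" and ends: "hd W = x" "last W = y"
  shows "walk_chain W = indicator {{x, y}}"
proof -
  obtain W' where W': "W = W' @ [y]"
    using walk ends by (metis append_butlast_last_id is_walk_Nil)
  define C where "C = W' @ y # [x]"
  have "W \<noteq> []"
    using walk by auto
  then have "x \<in> V" "y \<in> V"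
    using set_subset_if_is_walk[OF walk] ends by auto
  then have C_walk: "is_walk V E C"
    using walk is_walk_append_iff[of V E W' y "[x]"] sym[OF edge] unfolding C_def W' by simp
  have C_closed: "hd C = last C"
    using ends unfolding C_def W' by (cases W') auto
  have "walk_chain C = 0"
  proof (rule ccontr)
    assume "walk_chain C \<noteq> 0"
    then obtain m where "m < length C" "has_cycle_of_length V E m"
      using cycle_if_closed_walk_chain_nonzero[OF irrefl C_walk C_closed] by blast
    then show False
      using no_cycle unfolding C_def W' by simp
  qed
  moreover have "walk_chain C = walk_chain W + indicator {{y, x}}"
    using walk_chain_append[of W' y "[x]"] unfolding C_def W'
    by (simp only: walk_chain.simps add_0_right)
  ultimately show ?thesis
    by (metis bit_fun_add_eq_0_iff insert_commute)
qed

section \<open>Comparing the edge numbers of equivalent graphs\<close>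

text \<open>The walk is chosen for the unordered edge \<open>{a, b}\<close>, so that the chains of the chosen
  walks form a family of at most \<open>|E(H)|\<close> vectors.\<close>

lemma walk_chain_choice:
  assumes sym: "\<And>x y. G x y \<Longrightarrow> G y x"
    and short: "\<And>a b. H a b \<Longrightarrow> gdist V G a b \<le> enat M"
  obtains c where "\<And>a b. H a b \<Longrightarrow> \<exists>q. is_walk V G q \<and> hd q = a \<and> last q = b
    \<and> length q \<le> Suc M \<and> walk_chain q = c {a, b}"
proof -
  define P where "P e q \<longleftrightarrow> is_walk V G q \<and> {hd q, last q} = e \<and> length q \<le> Suc M" for e q
  define c where "c e = walk_chain (SOME q. P e q)" for e
  have "\<exists>q. is_walk V G q \<and> hd q = a \<and> last q = b \<and> length q \<le> Suc M \<and> walk_chain q = c {a, b}"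
    if hab: "H a b" for a b
  proof -
    obtain q0 where "is_walk V G q0" "hd q0 = a" "last q0 = b" "length q0 \<le> Suc M"
      using walk_if_gdist_le[OF short[OF hab]] .
    then have "P {a, b} q0"
      unfolding P_def by blast
    define q where "q = (SOME q. P {a, b} q)"
    have "P {a, b} q"
      unfolding q_def using \<open>P {a, b} q0\<close> by (rule someI)
    then have q: "is_walk V G q" "{hd q, last q} = {a, b}" "length q \<le> Suc M"
      unfolding P_def by auto
    have chain: "walk_chain q = c {a, b}"
      unfolding c_def q_def ..
    from q(2) consider "hd q = a" "last q = b" | "hd q = b" "last q = a"
      by (auto simp: doubleton_eq_iff)
    then show ?thesis
    proof cases
      case 1
      then show ?thesis using q chain by blast
    next
      case 2
      have "q \<noteq> []"
        using q(1) by auto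
      then have "is_walk V G (rev q)" "hd (rev q) = a" "last (rev q) = b"
        "length (rev q) \<le> Suc M" "walk_chain (rev q) = c {a, b}"
        using 2 q chain is_walk_rev[of G V q, OF sym] walk_chain_rev[of q]
        by (simp_all add: hd_rev last_rev)
      then show ?thesis by blast
    qed
  qed
  then show ?thesis using that by blast
qed

lemma walk_substitution:
  assumes step: "\<And>a b. H a b \<Longrightarrow> \<exists>q. is_walk V G q \<and> hd q = a \<and> last q = b
      \<and> length q \<le> Suc M \<and> walk_chain q \<in> T"
    and T_zero: "0 \<in> T" and T_add: "\<And>u v. u \<in> T \<Longrightarrow> v \<in> T \<Longrightarrow> u + v \<in> T"
  shows "is_walk V H p \<Longrightarrow> \<exists>W. is_walk V G W \<and> hd W = hd p \<and> last W = last p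
    \<and> length W \<le> (length p - 1) * M + 1 \<and> walk_chain W \<in> T"
proof (induction p rule: induct_list012)
  case (2 x)
  then have "is_walk V G [x]"
    by simp
  moreover have "walk_chain [x] \<in> T"
    using T_zero by (simp only: walk_chain.simps)
  moreover have "length [x] \<le> (length [x] - 1) * M + 1"
    by simp
  ultimately show ?case
    by blast
next
  case (3 x y xs)
  then obtain W where W: "is_walk V G W" "hd W = y" "last W = last (y # xs)"
      "length W \<le> length xs * M + 1" "walk_chain W \<in> T"
    by auto
  obtain q where q: "is_walk V G q" "hd q = x" "last q = y" "length q \<le> Suc M"
      "walk_chain q \<in> T"
    using step 3(3) by auto
  obtain q' where q': "q = q' @ [y]"
    using q by (metis append_butlast_last_id is_walk_Nil)
  obtain r where r: "W = y # r"
    using W by (cases W) auto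
  have "is_walk V G (q' @ y # r)"
    using is_walk_append_iff q W unfolding q' r by metis
  moreover have "walk_chain (q' @ y # r) \<in> T"
    using T_add q W walk_chain_append unfolding q' r by metis
  moreover have "hd (q' @ y # r) = x"
    using q unfolding q' by (cases q') auto
  moreover have "last (q' @ y # r) = last (x # y # xs)"
    using W unfolding r by simp
  moreover have "length (q' @ y # r) \<le> (length (x # y # xs) - 1) * M + 1"
    using q W unfolding q' r by simp
  ultimately show ?case
    by (metis list.sel(1))
qed simp

lemma num_edges_le_if_no_short_cycle:
  assumes G: "simple_graph V G" and H: "simple_graph V H"
    and G_in_H: "\<And>x y. G x y \<Longrightarrow> gdist V H x y \<le> enat L"
    and H_in_G: "\<And>x y. H x y \<Longrightarrow> gdist V G x y \<le> enat M"
    and girth: "\<And>m. m \<le> L * M + 1 \<Longrightarrow> \<not> has_cycle_of_length V G m"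
  shows "num_edges V G \<le> num_edges V H"
proof -
  define EG where "EG = {{x, y} | x y. x \<in> V \<and> y \<in> V \<and> G x y}"
  define EH where "EH = {{x, y} | x y. x \<in> V \<and> y \<in> V \<and> H x y}"
  have "EH \<subseteq> Pow V"
    unfolding EH_def by blast
  then have "finite EH"
    using G unfolding simple_graph_def by (meson finite_Pow_iff finite_subset)
  have G_simple: "\<And>x. \<not> G x x" "\<And>x y. G x y \<Longrightarrow> G y x"
    using G unfolding simple_graph_def by blast+
  obtain c where c: "\<And>a b. H a b \<Longrightarrow> \<exists>q. is_walk V G q \<and> hd q = a \<and> last q = b
      \<and> length q \<le> Suc M \<and> walk_chain q = c {a, b}"
    using walk_chain_choice[OF G_simple(2) H_in_G] by blast
  define T where "T = fun_space.span (c ` EH)"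
  have T_zero: "0 \<in> T" and T_add: "\<And>u v. u \<in> T \<Longrightarrow> v \<in> T \<Longrightarrow> u + v \<in> T"
    unfolding T_def by (rule fun_space.span_zero, rule fun_space.span_add)
  have step: "\<exists>q. is_walk V G q \<and> hd q = a \<and> last q = b \<and> length q \<le> Suc M \<and> walk_chain q \<in> T"
    if "H a b" for a b
  proof -
    have "{a, b} \<in> EH"
      using H that unfolding EH_def simple_graph_def by blast
    then have "c {a, b} \<in> T"
      unfolding T_def by (intro fun_space.span_base imageI)
    then show ?thesis
      using c[OF that] by metis
  qed
  have "indicator {e} \<in> T" if "e \<in> EG" for e
  proof -
    obtain x y where e: "e = {x, y}" and "G x y"
      using \<open>e \<in> EG\<close> unfolding EG_def by blast
    obtain p where p: "is_walk V H p" "hd p = x" "last p = y" "length p \<le> Suc L"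
      using walk_if_gdist_le[OF G_in_H[OF \<open>G x y\<close>]] .
    obtain W where W: "is_walk V G W" "hd W = x" "last W = y"
        "length W \<le> (length p - 1) * M + 1" "walk_chain W \<in> T"
      using walk_substitution[OF step T_zero T_add p(1)] p(2,3) by metis
    have "(length p - 1) * M \<le> L * M"
      using p(4) by (intro mult_right_mono) auto
    then have "length W \<le> L * M + 1"
      using W(4) by linarith
    then have "walk_chain W = indicator {{x, y}}"
      using walk_chain_eq_edge_indicator_if_no_short_cycle[OF G_simple _ \<open>G x y\<close> W(1-3)] girth
      by (meson le_trans)
    then show ?thesis
      using W(5) e by metis
  qed
  then have "(\<lambda>e. indicator {e}) ` EG \<subseteq> fun_space.span (c ` EH)"
    unfolding T_def by blast
  moreover have "fun_space.independent ((\<lambda>e. indicator {e} :: 'a set \<Rightarrow> bit) ` EG)"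
    using independent_point_indicators by (rule fun_space.independent_mono) blast
  ultimately have "card ((\<lambda>e. indicator {e} :: 'a set \<Rightarrow> bit) ` EG) \<le> card (c ` EH)"
    using fun_space.independent_span_bound[OF finite_imageI[OF \<open>finite EH\<close>]] by blast
  then have "card EG \<le> card (c ` EH)"
    using card_image[OF inj_on_subset[OF inj_point_indicator subset_UNIV]] by metis
  also have "\<dots> \<le> card EH"
    using \<open>finite EH\<close> by (rule card_image_le)
  finally show ?thesis
    unfolding num_edges_def EG_def EH_def .
qed

lemma seq_prec_edges_gdist_bounded:
  assumes "seq_prec V H G" "\<And>n. simple_graph (V n) (H n)"
  obtains L where "\<And>n x y. H n x y \<Longrightarrow> gdist (V n) (G n) x y \<le> enat L"
proof -
  obtain L :: nat where
    L: "\<And>n x y. x \<in> V n \<Longrightarrow> y \<in> V n \<Longrightarrow> gdist (V n) (G n) x y \<le> enat L * gdist (V n) (H n) x y"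
    using assms(1) unfolding seq_prec_def by blast
  have "gdist (V n) (G n) x y \<le> enat L" if "H n x y" for n x y
  proof -
    have xy: "x \<in> V n" "y \<in> V n"
      using that assms(2)[of n] unfolding simple_graph_def by blast+
    have "gdist (V n) (G n) x y \<le> enat L * gdist (V n) (H n) x y"
      using L xy .
    also have "\<dots> \<le> enat L * 1"
      using gdist_le_one_if_edge[of "H n", OF that xy] by (intro mult_left_mono) auto
    finally show ?thesis by simp
  qed
  then show ?thesis using that by blast
qed

lemma seq_equiv_refl: "seq_equiv V G G"
  unfolding seq_equiv_def seq_prec_def
  by (intro exI[of _ "1::nat"] conjI ballI allI)
    (simp_all only: enat_1 mult_1 order_refl zero_less_one)

lemma edge_number_mono:
  assumes "eventually (\<lambda>n. num_edges (V n) (G n) \<le> num_edges (V n) (H n)) sequentially"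
  shows "edge_number V G \<le> edge_number V H"
  unfolding edge_number_def
  by (rule Liminf_mono) (use assms in \<open>auto elim!: eventually_mono intro: divide_right_mono\<close>)

lemma edge_number_le_if_seq_equiv_large_girth:
  assumes G: "\<And>n. simple_graph (V n) (G n)" and H: "\<And>n. simple_graph (V n) (H n)"
    and "seq_equiv V G H" and "large_girth V G"
  shows "edge_number V G \<le> edge_number V H"
proof -
  obtain L where L: "\<And>n x y. G n x y \<Longrightarrow> gdist (V n) (H n) x y \<le> enat L"
    using seq_prec_edges_gdist_bounded[of V G H] G \<open>seq_equiv V G H\<close>
    unfolding seq_equiv_def by blast
  obtain M where M: "\<And>n x y. H n x y \<Longrightarrow> gdist (V n) (G n) x y \<le> enat M"
    using seq_prec_edges_gdist_bounded[of V H G] H \<open>seq_equiv V G H\<close>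
    unfolding seq_equiv_def by blast
  obtain n0 where "\<And>n m. n \<ge> n0 \<Longrightarrow> m \<le> L * M + 1 \<Longrightarrow> \<not> has_cycle_of_length (V n) (G n) m"
    using \<open>large_girth V G\<close> unfolding large_girth_def by (meson le_add2)
  then have "eventually (\<lambda>n. num_edges (V n) (G n) \<le> num_edges (V n) (H n)) sequentially"
    unfolding eventually_sequentially
    using num_edges_le_if_no_short_cycle[OF G H L M] by blast
  then show ?thesis
    by (rule edge_number_mono)
qed

theorem theorem1:
  fixes V :: "nat \<Rightarrow> 'a set" and G :: "nat \<Rightarrow> 'a \<Rightarrow> 'a \<Rightarrow> bool"
  assumes "graph_seq V G" and "large_girth V G"
  shows "edge_number V G = cost V G"
proof (rule antisym)
  have simple_G: "\<And>n. simple_graph (V n) (G n)"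
    using assms(1) unfolding graph_seq_def by blast
  show "edge_number V G \<le> cost V G"
    unfolding cost_def
  proof (rule Inf_greatest)
    fix z assume "z \<in> {edge_number V H | H. graph_seq V H \<and> seq_equiv V G H}"
    then obtain H where "z = edge_number V H" "graph_seq V H" "seq_equiv V G H"
      by blast
    then show "edge_number V G \<le> z"
      using edge_number_le_if_seq_equiv_large_girth[OF simple_G _ _ assms(2)]
      unfolding graph_seq_def by blast
  qed
  show "cost V G \<le> edge_number V G"
    unfolding cost_def using assms(1) seq_equiv_refl by (blast intro: Inf_lower)
qed

end
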